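(* (1) The associative algebra $(\mathcal{H}_{\mathbb{T}},.)$ is freely generated by the set of indecomposable topologies. (2) The associative algebra $(\mathcal{H}_{\mathbb{T}},\downarrow)$ is freely generated by the set of $\downarrow$-indecomposable topologies. (3) The 2-associative algebra $(\mathcal{H}_{\mathbb{T}},.,\downarrow)$ is freely generated by the set of bi-indecomposable topologies, i.e. for every 2-associative algebra $(A,.,\downarrow)$ and every choice of elements $a_{\mathcal{T}}\in A$ indexed by the bi-indecomposable topologies $\mathcal{T}$, there is a unique linear map $\phi:\mathcal{H}_{\mathbb{T}}\to A$ sending $1$ to the unit of $A$, compatible with both products, and with $\phi(\mathcal{T})=a_{\mathcal{T}}$ for every bi-indecomposable $\mathcal{T}$.
   Context: Let $K$ be a field. For $n\geq0$, $[n]=\{1,\ldots,n\}$, $\mathbb{T}_n$ is the set of topologies on $[n]$, and $\mathcal{H}_{\mathbb{T}}$ is the $K$-vector space with basis $\bigsqcup_{n\ge0}\mathbb{T}_n$; the empty topology on $[0]$ is denoted $1$. For $O\subseteq\mathbb{N}$, $O(+n)=\{k+n\mid k\in O\}$. For $\mathcal{T}\in\mathbb{T}_n$, $\mathcal{T}'\in\mathbb{T}_{n'}$: $\mathcal{T}.\mathcal{T}'$ is the topology on $[n+n']$ with open sets $O\sqcup O'(+n)$ ($O\in\mathcal{T}$, $O'\in\mathcal{T}'$); $\mathcal{T}\downarrow\mathcal{T}'$ is the topology on $[n+n']$ with open sets $O\sqcup[n'](+n)$ ($O\in\mathcal{T}$) and $O'(+n)$ ($O'\in\mathcal{T}'$).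 Both products are extended bilinearly to $\mathcal{H}_{\mathbb{T}}$; they are associative with common unit $1$. A topology $\mathcal{T}\neq 1$ is indecomposable if it cannot be written $\mathcal{T}'.\mathcal{T}''$ with $\mathcal{T}',\mathcal{T}''\neq1$; $\downarrow$-indecomposable if it cannot be written $\mathcal{T}'\downarrow\mathcal{T}''$ with $\mathcal{T}',\mathcal{T}''\neq 1$; bi-indecomposable if it is both. A 2-associative algebra is a vector space with two associative products sharing the same unit; morphisms preserve both products and the unit. *)

theory Defs
  imports Main "HOL-Library.Poly_Mapping"
begin

text \<open>A topology on [n] is encoded as the pair (n, T) with T the set of open sets.\<close>
type_synonym top = "nat \<times> nat set set"

definition is_topology :: "nat \<Rightarrow> nat set set \<Rightarrow> bool" where
  "is_topology n T \<longleftrightarrow> T \<subseteq> Pow {1..n} \<and> {1..n} \<in> T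
     \<and> (\<forall>S. S \<subseteq> T \<longrightarrow> \<Union>S \<in> T)
     \<and> (\<forall>U\<in>T. \<forall>V\<in>T. U \<inter> V \<in> T)"

definition Tops :: "top set" where
  "Tops = {(n, T). is_topology n T}"

definition shift :: "nat \<Rightarrow> nat set \<Rightarrow> nat set" where
  "shift n O' = (\<lambda>k. k + n) ` O'"

definition unit_top :: top where
  "unit_top = (0, {{}})"

definition dot_top :: "top \<Rightarrow> top \<Rightarrow> top" where
  "dot_top t t' = (case t of (n, T) \<Rightarrow> case t' of (n', T') \<Rightarrow>
     (n + n', {O1 \<union> shift n O2 | O1 O2. O1 \<in> T \<and> O2 \<in> T'}))"

definition down_top :: "top \<Rightarrow> top \<Rightarrow> top" where
  "down_top t t' = (case t of (n, T) \<Rightarrow> case t' of (n', T') \<Rightarrow>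
     (n + n', {O1 \<union> shift n {1..n'} | O1. O1 \<in> T} \<union> {shift n O2 | O2. O2 \<in> T'}))"

definition indecomposable :: "top \<Rightarrow> bool" where
  "indecomposable t \<longleftrightarrow> t \<in> Tops \<and> t \<noteq> unit_top \<and>
     \<not> (\<exists>t1\<in>Tops. \<exists>t2\<in>Tops. t1 \<noteq> unit_top \<and> t2 \<noteq> unit_top \<and> t = dot_top t1 t2)"

definition down_indecomposable :: "top \<Rightarrow> bool" where
  "down_indecomposable t \<longleftrightarrow> t \<in> Tops \<and> t \<noteq> unit_top \<and>
     \<not> (\<exists>t1\<in>Tops. \<exists>t2\<in>Tops. t1 \<noteq> unit_top \<and> t2 \<noteq> unit_top \<and> t = down_top t1 t2)"

definition bi_indecomposable :: "top \<Rightarrow> bool" where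
  "bi_indecomposable t \<longleftrightarrow> indecomposable t \<and> down_indecomposable t"

type_synonym 'k hvec = "top \<Rightarrow>\<^sub>0 'k"

definition HT :: "'k::field hvec set" where
  "HT = {f. Poly_Mapping.keys f \<subseteq> Tops}"

definition basis :: "top \<Rightarrow> 'k::field hvec" where
  "basis t = Poly_Mapping.single t 1"

definition hscale :: "'k::field \<Rightarrow> 'k hvec \<Rightarrow> 'k hvec" where
  "hscale c f = Poly_Mapping.map (\<lambda>x. c * x) f"

definition lin_prod :: "(top \<Rightarrow> top \<Rightarrow> top) \<Rightarrow> 'k::field hvec \<Rightarrow> 'k hvec \<Rightarrow> 'k hvec" where
  "lin_prod P f g = (\<Sum>x\<in>Poly_Mapping.keys f. \<Sum>y\<in>Poly_Mapping.keys g.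
      Poly_Mapping.single (P x y) (Poly_Mapping.lookup f x * Poly_Mapping.lookup g y))"

definition k_algebra :: "('k::field \<Rightarrow> 'a::ab_group_add \<Rightarrow> 'a) \<Rightarrow> ('a \<Rightarrow> 'a \<Rightarrow> 'a) \<Rightarrow> 'a \<Rightarrow> bool" where
  "k_algebra sc m u \<longleftrightarrow>
     (\<forall>c x y. sc c (x + y) = sc c x + sc c y) \<and>
     (\<forall>c d x. sc (c + d) x = sc c x + sc d x) \<and>
     (\<forall>c d x. sc (c * d) x = sc c (sc d x)) \<and>
     (\<forall>x. sc 1 x = x) \<and>
     (\<forall>x y z. m (m x y) z = m x (m y z)) \<and>
     (\<forall>x y z. m (x + y) z = m x z + m y z) \<and>
     (\<forall>x y z. m x (y + z) = m x y + m x z) \<and>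
     (\<forall>c x y. m (sc c x) y = sc c (m x y)) \<and>
     (\<forall>c x y. m x (sc c y) = sc c (m x y)) \<and>
     (\<forall>x. m u x = x) \<and> (\<forall>x. m x u = x)"

definition two_assoc_algebra :: "('k::field \<Rightarrow> 'a::ab_group_add \<Rightarrow> 'a) \<Rightarrow> ('a \<Rightarrow> 'a \<Rightarrow> 'a) \<Rightarrow> ('a \<Rightarrow> 'a \<Rightarrow> 'a) \<Rightarrow> 'a \<Rightarrow> bool" where
  "two_assoc_algebra sc m1 m2 u \<longleftrightarrow> k_algebra sc m1 u \<and> k_algebra sc m2 u"

text \<open>K-linear maps on H_T (only values on H_T matter).\<close>
definition lin_on_HT :: "('k::field \<Rightarrow> 'a::ab_group_add \<Rightarrow> 'a) \<Rightarrow> ('k hvec \<Rightarrow> 'a) \<Rightarrow> bool" where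
  "lin_on_HT sc \<phi> \<longleftrightarrow> (\<forall>f\<in>HT. \<forall>g\<in>HT. \<phi> (f + g) = \<phi> f + \<phi> g) \<and>
                      (\<forall>c. \<forall>f\<in>HT. \<phi> (hscale c f) = sc c (\<phi> f))"

definition alg_hom_HT :: "(top \<Rightarrow> top \<Rightarrow> top) \<Rightarrow> ('k::field \<Rightarrow> 'a::ab_group_add \<Rightarrow> 'a) \<Rightarrow> ('a \<Rightarrow> 'a \<Rightarrow> 'a) \<Rightarrow> 'a \<Rightarrow> ('k hvec \<Rightarrow> 'a) \<Rightarrow> bool" where
  "alg_hom_HT P sc m u \<phi> \<longleftrightarrow> lin_on_HT sc \<phi> \<and> \<phi> (basis unit_top) = u \<and>
     (\<forall>f\<in>HT. \<forall>g\<in>HT. \<phi> (lin_prod P f g) = m (\<phi> f) (\<phi> g))"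

text \<open>(H_T, P) is freely generated (as unital associative K-algebra) by the set of
  topologies satisfying G, tested against algebras on the type 'a.\<close>
definition freely_generated :: "'k::field itself \<Rightarrow> 'a::ab_group_add itself \<Rightarrow> (top \<Rightarrow> top \<Rightarrow> top) \<Rightarrow> (top \<Rightarrow> bool) \<Rightarrow> bool" where
  "freely_generated _ _ P G \<longleftrightarrow>
    (\<forall>(sc :: 'k \<Rightarrow> 'a \<Rightarrow> 'a) m u (a :: top \<Rightarrow> 'a). k_algebra sc m u \<longrightarrow>
      (\<exists>\<phi>. alg_hom_HT P sc m u \<phi> \<and> (\<forall>t. G t \<longrightarrow> \<phi> (basis t) = a t) \<and>
        (\<forall>\<psi>. alg_hom_HT P sc m u \<psi> \<and> (\<forall>t. G t \<longrightarrow> \<psi> (basis t) = a t)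
              \<longrightarrow> (\<forall>f\<in>HT. \<psi> f = \<phi> f))))"

definition freely_generated2 :: "'k::field itself \<Rightarrow> 'a::ab_group_add itself \<Rightarrow> (top \<Rightarrow> bool) \<Rightarrow> bool" where
  "freely_generated2 _ _ G \<longleftrightarrow>
    (\<forall>(sc :: 'k \<Rightarrow> 'a \<Rightarrow> 'a) m1 m2 u (a :: top \<Rightarrow> 'a). two_assoc_algebra sc m1 m2 u \<longrightarrow>
      (\<exists>\<phi>. alg_hom_HT dot_top sc m1 u \<phi> \<and> alg_hom_HT down_top sc m2 u \<phi> \<and>
           (\<forall>t. G t \<longrightarrow> \<phi> (basis t) = a t) \<and>
        (\<forall>\<psi>. alg_hom_HT dot_top sc m1 u \<psi> \<and> alg_hom_HT down_top sc m2 u \<psi> \<and>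
              (\<forall>t. G t \<longrightarrow> \<psi> (basis t) = a t)
              \<longrightarrow> (\<forall>f\<in>HT. \<psi> f = \<phi> f))))"

end

theory Submission
  imports Defs
begin

text \<open>Both products place a topology on \<open>[n]\<close> next to one on \<open>[n']\<close>, and the factors are
  recovered by restricting to \<open>[n]\<close> and to its complement; moreover restricting a product to
  a longer initial segment gives a product with the same left factor. Hence, for each product,
  cancellation of atoms holds and every decomposable topology is uniquely an atom times a
  nontrivial rest. Splitting off this atom defines the extension of prescribed values on the
  generators by recursion on the size of the underlying set, and any morphism agreeing on the
  generators is forced to coincide with it. For the two products together, no topology
  decomposes for both, so the two splittings never compete.\<close>

lemma is_topology_subset: "is_topology n T \<Longrightarrow> U \<in> T \<Longrightarrow> U \<subseteq> {1..n}"
  unfolding is_topology_def by auto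

lemma is_topology_full: "is_topology n T \<Longrightarrow> {1..n} \<in> T"
  unfolding is_topology_def by auto

lemma is_topology_empty: "is_topology n T \<Longrightarrow> {} \<in> T"
  unfolding is_topology_def by (metis Union_empty empty_subsetI)

lemma is_topology_Union: "is_topology n T \<Longrightarrow> S \<subseteq> T \<Longrightarrow> \<Union>S \<in> T"
  unfolding is_topology_def by auto

lemma is_topology_Int: "is_topology n T \<Longrightarrow> U \<in> T \<Longrightarrow> V \<in> T \<Longrightarrow> U \<inter> V \<in> T"
  unfolding is_topology_def by auto

lemma is_topology_inter:
  assumes "is_topology n T" "is_topology n T'"
  shows "is_topology n (T \<inter> T')"
  using assms unfolding is_topology_def by (auto simp: subset_iff)

lemma Tops_iff [simp]: "(n, T) \<in> Tops \<longleftrightarrow> is_topology n T"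
  by (simp add: Tops_def)

lemma unit_top_in_Tops: "unit_top \<in> Tops"
  by (auto simp: unit_top_def is_topology_def)

lemma Tops_size_zero: "t \<in> Tops \<Longrightarrow> fst t = 0 \<Longrightarrow> t = unit_top"
  by (cases t) (auto simp: unit_top_def Tops_def is_topology_def dest: is_topology_empty)

lemma mem_shift_iff: "x \<in> shift n A \<longleftrightarrow> n \<le> x \<and> x - n \<in> A"
  unfolding shift_def by (auto intro: image_eqI[where x="x - n"])

lemma shift_0 [simp]: "shift 0 A = A"
  by (simp add: shift_def)

lemma shift_empty [simp]: "shift n {} = {}"
  by (simp add: shift_def)

lemma shift_Un: "shift n (A \<union> B) = shift n A \<union> shift n B"
  by (auto simp: shift_def)

lemma shift_shift: "shift n (shift m A) = shift (n + m) A"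
  by (auto simp: shift_def image_image add.assoc add.commute[of m n])

definition unshift :: "nat \<Rightarrow> nat set \<Rightarrow> nat set" where
  "unshift n X = {x. 0 < x \<and> x + n \<in> X}"

lemma unshift_Union: "unshift n (\<Union>S) = \<Union>(unshift n ` S)"
  unfolding unshift_def by auto

lemma unshift_Int: "unshift n (X \<inter> Y) = unshift n X \<inter> unshift n Y"
  unfolding unshift_def by auto

lemma unshift_interval: "unshift n {1..n + n'} = {1..n'}"
  unfolding unshift_def by auto

lemma unshift_subset: "X \<subseteq> {1..n + n'} \<Longrightarrow> unshift n X \<subseteq> {1..n'}"
  unfolding unshift_def by auto

lemma split_interval_shift: "X \<subseteq> {1..n + n'} \<Longrightarrow> X = X \<inter> {1..n} \<union> shift n (unshift n X)"
  unfolding unshift_def by (auto simp: mem_shift_iff subset_iff)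

lemma glue_subset: "O1 \<subseteq> {1..n} \<Longrightarrow> O2 \<subseteq> {1..n'} \<Longrightarrow> O1 \<union> shift n O2 \<subseteq> {1..n + n'}"
  unfolding shift_def by auto

lemma unshift_glue: "O1 \<subseteq> {1..n} \<Longrightarrow> O2 \<subseteq> {1..n'} \<Longrightarrow> unshift n (O1 \<union> shift n O2) = O2"
  unfolding unshift_def by (auto simp: mem_shift_iff subset_iff)

lemma glue_Int_interval:
  assumes "O1 \<subseteq> {1..n}" "O2 \<subseteq> {1..n'}"
  shows "(O1 \<union> shift n O2) \<inter> {1..n + j} = O1 \<union> shift n (O2 \<inter> {1..j})"
proof -
  have "x \<in> shift n (O2 \<inter> {1..j}) \<longleftrightarrow> x \<in> shift n O2 \<and> x \<in> {1..n + j}" for x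
    using assms(2) by (auto simp: mem_shift_iff)
  then show ?thesis using assms(1) by auto
qed

definition glue :: "nat \<Rightarrow> (nat set \<times> nat set) set \<Rightarrow> nat set set" where
  "glue n S = (\<lambda>(O1, O2). O1 \<union> shift n O2) ` S"

lemma glue_memI: "(O1, O2) \<in> S \<Longrightarrow> O1 \<union> shift n O2 \<in> glue n S"
  by (force simp: glue_def)

lemma dot_top_eq_glue: "dot_top (n, T) (n', T') = (n + n', glue n (T \<times> T'))"
  by (auto simp: dot_top_def glue_def)

lemma down_top_eq_glue:
  "down_top (n, T) (n', T') = (n + n', glue n (T \<times> {{1..n'}} \<union> {{}} \<times> T'))"
  by (force simp: down_top_def glue_def)

lemma glue_Un: "glue n (A \<union> B) = glue n A \<union> glue n B"
  by (simp add: glue_def image_Un)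

lemma glue_Times_singleton: "glue n (A \<times> {B}) = (\<lambda>U. U \<union> shift n B) ` A"
  by (auto simp: glue_def)

lemma glue_empty_Times: "glue n ({{}} \<times> C) = shift n ` C"
  by (auto simp: glue_def)

lemma dot_top_assoc: "dot_top (dot_top a b) c = dot_top a (dot_top b c)"
proof -
  obtain n1 T1 n2 T2 n3 T3 where abc: "a = (n1, T1)" "b = (n2, T2)" "c = (n3, T3)"
    by (metis surj_pair)
  have "glue (n1 + n2) (glue n1 (T1 \<times> T2) \<times> T3) = glue n1 (T1 \<times> glue n2 (T2 \<times> T3))"
    by (auto simp: glue_def shift_Un shift_shift Un_assoc image_iff) blast+
  then show ?thesis by (simp add: abc dot_top_eq_glue add.assoc)
qed

lemma down_top_assoc: "down_top (down_top a b) c = down_top a (down_top b c)"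
proof -
  obtain n1 T1 n2 T2 n3 T3 where abc: "a = (n1, T1)" "b = (n2, T2)" "c = (n3, T3)"
    by (metis surj_pair)
  have "shift n1 {1..n2} \<union> shift (n1 + n2) {1..n3} = shift n1 {1..n2 + n3}"
    by (auto simp: mem_shift_iff)
  then show ?thesis
    by (simp add: abc down_top_eq_glue add.assoc glue_Un glue_Times_singleton glue_empty_Times image_Un
        image_image shift_Un shift_shift Un_assoc)
qed

lemma glue_Times_eq:
  assumes "is_topology n T" "is_topology n' T'"
  shows "glue n (T \<times> T') = {X. X \<subseteq> {1..n + n'} \<and> X \<inter> {1..n} \<in> T \<and> unshift n X \<in> T'}"
proof (intro equalityI subsetI)
  fix X assume "X \<in> glue n (T \<times> T')"
  then obtain O1 O2 where "O1 \<in> T" "O2 \<in> T'" "X = O1 \<union> shift n O2"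
    by (auto simp: glue_def)
  moreover note sub = is_topology_subset[OF assms(1) \<open>O1 \<in> T\<close>] is_topology_subset[OF assms(2) \<open>O2 \<in> T'\<close>]
  ultimately show "X \<in> {X. X \<subseteq> {1..n + n'} \<and> X \<inter> {1..n} \<in> T \<and> unshift n X \<in> T'}"
    using glue_subset[OF sub] glue_Int_interval[OF sub, of 0] unshift_glue[OF sub] by simp
next
  fix X assume "X \<in> {X. X \<subseteq> {1..n + n'} \<and> X \<inter> {1..n} \<in> T \<and> unshift n X \<in> T'}"
  then have "X = X \<inter> {1..n} \<union> shift n (unshift n X)" "X \<inter> {1..n} \<in> T" "unshift n X \<in> T'"
    using split_interval_shift[of X n n'] by auto
  then show "X \<in> glue n (T \<times> T')"
    by (metis SigmaI glue_memI)
qed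

lemma glue_down_eq:
  assumes "is_topology n T" "is_topology n' T'"
  shows "glue n (T \<times> {{1..n'}} \<union> {{}} \<times> T') =
    glue n (T \<times> T') \<inter> {X. X \<inter> {1..n} = {} \<or> unshift n X = {1..n'}}"
proof (intro equalityI subsetI)
  fix X assume "X \<in> glue n (T \<times> {{1..n'}} \<union> {{}} \<times> T')"
  then obtain O1 O2 where O12: "(O1, O2) \<in> T \<times> {{1..n'}} \<union> {{}} \<times> T'" "X = O1 \<union> shift n O2"
    by (auto simp: glue_def)
  then have "O1 \<in> T" "O2 \<in> T'"
    using is_topology_empty[OF assms(1)] is_topology_full[OF assms(2)] by auto
  note sub = is_topology_subset[OF assms(1) this(1)] is_topology_subset[OF assms(2) this(2)]
  have "O1 = {} \<or> O2 = {1..n'}" using O12(1) by auto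
  then show "X \<in> glue n (T \<times> T') \<inter> {X. X \<inter> {1..n} = {} \<or> unshift n X = {1..n'}}"
    using \<open>O1 \<in> T\<close> \<open>O2 \<in> T'\<close> O12(2) glue_Int_interval[OF sub, of 0] unshift_glue[OF sub]
    by (auto simp: glue_def)
next
  fix X assume "X \<in> glue n (T \<times> T') \<inter> {X. X \<inter> {1..n} = {} \<or> unshift n X = {1..n'}}"
  then have X: "X = X \<inter> {1..n} \<union> shift n (unshift n X)" "X \<inter> {1..n} \<in> T" "unshift n X \<in> T'"
    "X \<inter> {1..n} = {} \<or> unshift n X = {1..n'}"
    using split_interval_shift[of X n n'] by (auto simp: glue_Times_eq[OF assms])
  then have "(X \<inter> {1..n}, unshift n X) \<in> T \<times> {{1..n'}} \<union> {{}} \<times> T'"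
    by auto
  then show "X \<in> glue n (T \<times> {{1..n'}} \<union> {{}} \<times> T')"
    by (metis X(1) glue_memI)
qed

lemma is_topology_glue_Times:
  assumes "is_topology n T" "is_topology n' T'"
  shows "is_topology (n + n') (glue n (T \<times> T'))"
  unfolding glue_Times_eq[OF assms] is_topology_def
proof (intro conjI allI impI ballI)
  show "{1..n + n'} \<in> {X. X \<subseteq> {1..n + n'} \<and> X \<inter> {1..n} \<in> T \<and> unshift n X \<in> T'}"
    using is_topology_full[OF assms(1)] is_topology_full[OF assms(2)] unshift_interval[of n n']
    by (simp add: Int_absorb1)
  fix S assume S: "S \<subseteq> {X. X \<subseteq> {1..n + n'} \<and> X \<inter> {1..n} \<in> T \<and> unshift n X \<in> T'}"
  have "\<Union>S \<inter> {1..n} = \<Union>((\<lambda>X. X \<inter> {1..n}) ` S)" by auto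
  then show "\<Union>S \<in> {X. X \<subseteq> {1..n + n'} \<and> X \<inter> {1..n} \<in> T \<and> unshift n X \<in> T'}"
    using S is_topology_Union[OF assms(1), of "(\<lambda>X. X \<inter> {1..n}) ` S"]
      is_topology_Union[OF assms(2), of "unshift n ` S"]
    by (auto simp: unshift_Union)
next
  fix U V assume "U \<in> {X. X \<subseteq> {1..n + n'} \<and> X \<inter> {1..n} \<in> T \<and> unshift n X \<in> T'}"
    and "V \<in> {X. X \<subseteq> {1..n + n'} \<and> X \<inter> {1..n} \<in> T \<and> unshift n X \<in> T'}"
  moreover have "U \<inter> V \<inter> {1..n} = (U \<inter> {1..n}) \<inter> (V \<inter> {1..n})" by auto
  ultimately show "U \<inter> V \<in> {X. X \<subseteq> {1..n + n'} \<and> X \<inter> {1..n} \<in> T \<and> unshift n X \<in> T'}"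
    using is_topology_Int[OF assms(1)] is_topology_Int[OF assms(2)] by (auto simp: unshift_Int)
qed auto

lemma is_topology_block:
  "is_topology (n + n') {X. X \<subseteq> {1..n + n'} \<and> (X \<inter> {1..n} = {} \<or> unshift n X = {1..n'})}"
  (is "is_topology _ ?B")
  unfolding is_topology_def
proof (intro conjI allI impI ballI)
  show "?B \<subseteq> Pow {1..n + n'}" by auto
  show "{1..n + n'} \<in> ?B" using unshift_interval[of n n'] by simp
  fix S assume S: "S \<subseteq> ?B"
  have "unshift n (\<Union>S) = {1..n'}" if "X \<in> S" "X \<inter> {1..n} \<noteq> {}" for X
  proof -
    have "unshift n X = {1..n'}" using that S by auto
    moreover have "unshift n Y \<subseteq> {1..n'}" if "Y \<in> S" for Y
      using unshift_subset[of Y n n'] S that by auto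
    ultimately show ?thesis using \<open>X \<in> S\<close> unfolding unshift_Union by blast
  qed
  moreover have "\<Union>S \<subseteq> {1..n + n'}" using S by blast
  ultimately show "\<Union>S \<in> ?B" by blast
next
  fix U V assume "U \<in> ?B" "V \<in> ?B"
  then show "U \<inter> V \<in> ?B" by (auto simp: unshift_Int)
qed

lemma is_topology_glue_down:
  assumes "is_topology n T" "is_topology n' T'"
  shows "is_topology (n + n') (glue n (T \<times> {{1..n'}} \<union> {{}} \<times> T'))"
proof -
  have "glue n (T \<times> {{1..n'}} \<union> {{}} \<times> T') = glue n (T \<times> T') \<inter>
      {X. X \<subseteq> {1..n + n'} \<and> (X \<inter> {1..n} = {} \<or> unshift n X = {1..n'})}"
    unfolding glue_down_eq[OF assms] by (auto simp: glue_Times_eq[OF assms])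
  then show ?thesis
    using is_topology_inter[OF is_topology_glue_Times[OF assms] is_topology_block] by simp
qed

lemma dot_top_in_Tops: "a \<in> Tops \<Longrightarrow> b \<in> Tops \<Longrightarrow> dot_top a b \<in> Tops"
  by (cases a; cases b) (simp add: dot_top_eq_glue is_topology_glue_Times)

lemma down_top_in_Tops: "a \<in> Tops \<Longrightarrow> b \<in> Tops \<Longrightarrow> down_top a b \<in> Tops"
  by (cases a; cases b) (metis Tops_iff down_top_eq_glue is_topology_glue_down)

lemma fst_dot_top [simp]: "fst (dot_top a b) = fst a + fst b"
  by (cases a; cases b) (simp add: dot_top_def)

lemma fst_down_top [simp]: "fst (down_top a b) = fst a + fst b"
  by (cases a; cases b) (simp add: down_top_def)

lemma dot_top_unit_right: "dot_top a unit_top = a"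
  by (cases a) (simp add: dot_top_def unit_top_def)

lemma down_top_unit_right: "a \<in> Tops \<Longrightarrow> down_top a unit_top = a"
  by (cases a) (auto simp: down_top_def unit_top_def dest: is_topology_empty)

lemma dot_top_unit_left: "dot_top unit_top a = a"
  by (cases a) (simp add: dot_top_def unit_top_def)

lemma down_top_unit_left: "a \<in> Tops \<Longrightarrow> down_top unit_top a = a"
  by (cases a) (auto simp: down_top_def unit_top_def dest: is_topology_full)

lemma Tops_size_pos: "t \<in> Tops \<Longrightarrow> t \<noteq> unit_top \<Longrightarrow> 0 < fst t"
  using Tops_size_zero by blast

definition top_prefix :: "top \<Rightarrow> nat \<Rightarrow> top" where
  "top_prefix t j = (j, (\<lambda>U. U \<inter> {1..j}) ` snd t)"

definition top_suffix :: "top \<Rightarrow> nat \<Rightarrow> top" where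
  "top_suffix t k = (fst t - k, unshift k ` snd t)"

lemma top_prefix_in_Tops:
  assumes "t \<in> Tops" "j \<le> fst t"
  shows "top_prefix t j \<in> Tops"
proof -
  obtain n T where t: "t = (n, T)" "is_topology n T" using assms(1) by (cases t) auto
  let ?T = "(\<lambda>U. U \<inter> {1..j}) ` T"
  have "is_topology j ?T"
    unfolding is_topology_def
  proof (intro conjI allI impI ballI)
    show "?T \<subseteq> Pow {1..j}" by auto
    have "{1..j} = {1..n} \<inter> {1..j}" using assms(2) t(1) by auto
    then show "{1..j} \<in> ?T" using is_topology_full[OF t(2)] by blast
    fix S assume "S \<subseteq> ?T"
    then obtain S' where S': "S' \<subseteq> T" "S = (\<lambda>U. U \<inter> {1..j}) ` S'"
      by (auto simp: subset_image_iff)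
    then have "\<Union>S = \<Union>S' \<inter> {1..j}" by auto
    then show "\<Union>S \<in> ?T" using is_topology_Union[OF t(2) S'(1)] by blast
  next
    fix U V assume "U \<in> ?T" "V \<in> ?T"
    then obtain U' V' where "U' \<in> T" "V' \<in> T" "U = U' \<inter> {1..j}" "V = V' \<inter> {1..j}" by blast
    then have "U \<inter> V = (U' \<inter> V') \<inter> {1..j}" "U' \<inter> V' \<in> T" using is_topology_Int[OF t(2)] by auto
    then show "U \<inter> V \<in> ?T" by blast
  qed
  then show ?thesis by (simp add: top_prefix_def t(1))
qed

lemma top_prefix_zero: "t \<in> Tops \<Longrightarrow> top_prefix t 0 = unit_top"
  by (cases t) (auto simp: top_prefix_def unit_top_def dest: is_topology_empty)

lemma top_prefix_glue:
  assumes "S \<subseteq> Pow {1..n} \<times> Pow {1..n'}"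
  shows "top_prefix (n + n', glue n S) (n + j) = (n + j, glue n (apsnd (\<lambda>U. U \<inter> {1..j}) ` S))"
proof -
  have "(\<lambda>U. U \<inter> {1..n + j}) ` glue n S = glue n (apsnd (\<lambda>U. U \<inter> {1..j}) ` S)"
    unfolding glue_def image_image
  proof (rule image_cong)
    fix p assume "p \<in> S"
    then obtain O1 O2 where "p = (O1, O2)" "O1 \<subseteq> {1..n}" "O2 \<subseteq> {1..n'}" using assms by auto
    then show "(case p of (O1, O2) \<Rightarrow> O1 \<union> shift n O2) \<inter> {1..n + j} =
        (case apsnd (\<lambda>U. U \<inter> {1..j}) p of (O1, O2) \<Rightarrow> O1 \<union> shift n O2)"
      using glue_Int_interval[of O1 n O2 n' j] by simp
  qed simp
  then show ?thesis by (simp add: top_prefix_def)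
qed

lemma top_suffix_glue:
  assumes "S \<subseteq> Pow {1..n} \<times> Pow {1..n'}"
  shows "top_suffix (n + n', glue n S) n = (n', snd ` S)"
proof -
  have "unshift n ` glue n S = snd ` S"
    unfolding glue_def image_image
  proof (rule image_cong)
    fix p assume "p \<in> S"
    then obtain O1 O2 where "p = (O1, O2)" "O1 \<subseteq> {1..n}" "O2 \<subseteq> {1..n'}" using assms by auto
    then show "unshift n (case p of (O1, O2) \<Rightarrow> O1 \<union> shift n O2) = snd p"
      using unshift_glue[of O1 n O2 n'] by simp
  qed simp
  then show ?thesis by (simp add: top_suffix_def)
qed

lemma Times_subset_Pow:
  "is_topology n T \<Longrightarrow> is_topology n' T' \<Longrightarrow> T \<times> T' \<subseteq> Pow {1..n} \<times> Pow {1..n'}"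
  by (meson PowI Sigma_mono is_topology_subset subsetI)

lemma apsnd_image_Times: "apsnd f ` (A \<times> B) = A \<times> f ` B"
  by force

lemma dot_top_prefix:
  assumes "a \<in> Tops" "b \<in> Tops"
  shows "top_prefix (dot_top a b) (fst a + j) = dot_top a (top_prefix b j)"
proof -
  obtain n T n' T' where ab: "a = (n, T)" "b = (n', T')" "is_topology n T" "is_topology n' T'"
    using assms by (cases a; cases b) auto
  show ?thesis
    using top_prefix_glue[OF Times_subset_Pow[OF ab(3,4)], of j]
    by (simp add: ab(1,2) dot_top_eq_glue top_prefix_def apsnd_image_Times)
qed

lemma dot_top_suffix:
  assumes "a \<in> Tops" "b \<in> Tops"
  shows "top_suffix (dot_top a b) (fst a) = b"
proof -
  obtain n T n' T' where ab: "a = (n, T)" "b = (n', T')" "is_topology n T" "is_topology n' T'"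
    using assms by (cases a; cases b) auto
  have "snd ` (T \<times> T') = T'" using is_topology_empty[OF ab(3)] by force
  then show ?thesis
    using top_suffix_glue[OF Times_subset_Pow[OF ab(3,4)]] by (simp add: ab(1,2) dot_top_eq_glue)
qed

lemma down_top_prefix:
  assumes "a \<in> Tops" "b \<in> Tops" "j \<le> fst b"
  shows "top_prefix (down_top a b) (fst a + j) = down_top a (top_prefix b j)"
proof -
  obtain n T n' T' where ab: "a = (n, T)" "b = (n', T')" "is_topology n T" "is_topology n' T'"
    using assms by (cases a; cases b) auto
  have S: "T \<times> {{1..n'}} \<union> {{}} \<times> T' \<subseteq> Pow {1..n} \<times> Pow {1..n'}"
    using is_topology_subset[OF ab(3)] is_topology_subset[OF ab(4)] by auto
  have "j \<le> n'" using assms(3) ab(2) by simp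
  then show ?thesis
    using top_prefix_glue[OF S, of j]
    by (simp add: ab(1,2) down_top_eq_glue top_prefix_def image_Un apsnd_image_Times min_absorb2)
qed

lemma down_top_suffix:
  assumes "a \<in> Tops" "b \<in> Tops"
  shows "top_suffix (down_top a b) (fst a) = b"
proof -
  obtain n T n' T' where ab: "a = (n, T)" "b = (n', T')" "is_topology n T" "is_topology n' T'"
    using assms by (cases a; cases b) auto
  have S: "T \<times> {{1..n'}} \<union> {{}} \<times> T' \<subseteq> Pow {1..n} \<times> Pow {1..n'}"
    using is_topology_subset[OF ab(3)] is_topology_subset[OF ab(4)] by auto
  have "snd ` (T \<times> {{1..n'}} \<union> {{}} \<times> T') = T'"
    using is_topology_empty[OF ab(3)] is_topology_full[OF ab(4)] by force
  then show ?thesis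
    using top_suffix_glue[OF S] by (simp add: ab(1,2) down_top_eq_glue)
qed

definition multiplicative :: "(top \<Rightarrow> top \<Rightarrow> top) \<Rightarrow> ('a \<Rightarrow> 'a \<Rightarrow> 'a) \<Rightarrow> (top \<Rightarrow> 'a) \<Rightarrow> bool" where
  "multiplicative P m g \<longleftrightarrow> (\<forall>x\<in>Tops. \<forall>y\<in>Tops. g (P x y) = m (g x) (g y))"

locale concat_product =
  fixes P :: "top \<Rightarrow> top \<Rightarrow> top"
  assumes P_in_Tops: "a \<in> Tops \<Longrightarrow> b \<in> Tops \<Longrightarrow> P a b \<in> Tops"
    and fst_P: "fst (P a b) = fst a + fst b"
    and P_assoc: "P (P a b) c = P a (P b c)"
    and P_unit_left: "a \<in> Tops \<Longrightarrow> P unit_top a = a"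
    and P_unit_right: "a \<in> Tops \<Longrightarrow> P a unit_top = a"
    and top_prefix_P: "a \<in> Tops \<Longrightarrow> b \<in> Tops \<Longrightarrow> j \<le> fst b \<Longrightarrow>
      top_prefix (P a b) (fst a + j) = P a (top_prefix b j)"
    and top_suffix_P: "a \<in> Tops \<Longrightarrow> b \<in> Tops \<Longrightarrow> top_suffix (P a b) (fst a) = b"
begin

definition decomposable :: "top \<Rightarrow> bool" where
  "decomposable t \<longleftrightarrow> (\<exists>x\<in>Tops. \<exists>y\<in>Tops. x \<noteq> unit_top \<and> y \<noteq> unit_top \<and> t = P x y)"

definition atom :: "top \<Rightarrow> bool" where
  "atom t \<longleftrightarrow> t \<in> Tops \<and> t \<noteq> unit_top \<and> \<not> decomposable t"

lemma top_prefix_P_left: "a \<in> Tops \<Longrightarrow> b \<in> Tops \<Longrightarrow> top_prefix (P a b) (fst a) = a"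
  using top_prefix_P[of a b 0] by (simp add: top_prefix_zero P_unit_right)

lemma decomposableI:
  "x \<in> Tops \<Longrightarrow> y \<in> Tops \<Longrightarrow> x \<noteq> unit_top \<Longrightarrow> y \<noteq> unit_top \<Longrightarrow> decomposable (P x y)"
  unfolding decomposable_def by blast

lemma decomposableD:
  assumes "decomposable t"
  obtains x y where "x \<in> Tops" "y \<in> Tops" "x \<noteq> unit_top" "y \<noteq> unit_top" "t = P x y"
    and "fst x < fst t" "fst y < fst t"
  using assms Tops_size_pos fst_P unfolding decomposable_def
  by (metis add.commute less_add_same_cancel1)

lemma not_decomposable_unit: "\<not> decomposable unit_top"
  by (metis decomposableD fst_conv not_less0 unit_top_def)

lemma atom_cancel:
  assumes "atom a" "atom c" "b \<in> Tops" "d \<in> Tops" "P a b = P c d"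
  shows "a = c \<and> b = d"
proof -
  have "fst a = fst c" if "atom a" "atom c" "b \<in> Tops" "d \<in> Tops" "P a b = P c d" "fst a \<le> fst c"
    for a b c d
  proof (rule ccontr)
    assume "fst a \<noteq> fst c"
    define j where "j = fst c - fst a"
    have "fst a + fst b = fst c + fst d" using that(5) fst_P by metis
    then have j: "j \<le> fst b" "0 < j" "fst c = fst a + j"
      using that(6) \<open>fst a \<noteq> fst c\<close> by (auto simp: j_def)
    have "c = top_prefix (P c d) (fst c)" using top_prefix_P_left that by (simp add: atom_def)
    also have "\<dots> = top_prefix (P a b) (fst a + j)" using that(5) j(3) by simp
    also have "\<dots> = P a (top_prefix b j)"
      using top_prefix_P that(1,3) j(1) by (simp add: atom_def)
    finally have "decomposable c"
      using that top_prefix_in_Tops[OF that(3) j(1)] j(2)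
      unfolding decomposable_def atom_def by (metis fst_conv less_irrefl top_prefix_def unit_top_def)
    then show False using that(2) by (simp add: atom_def)
  qed
  then have "fst a = fst c" using assms nat_le_linear by metis
  then show ?thesis
    using assms top_prefix_P_left top_suffix_P by (metis atom_def)
qed

lemma exists_atom_factor:
  "x \<in> Tops \<Longrightarrow> x \<noteq> unit_top \<Longrightarrow> \<exists>a y. atom a \<and> y \<in> Tops \<and> x = P a y"
proof (induction "fst x" arbitrary: x rule: less_induct)
  case less
  show ?case
  proof (cases "decomposable x")
    case True
    then obtain x1 x2 where x: "x1 \<in> Tops" "x2 \<in> Tops" "x1 \<noteq> unit_top" "x = P x1 x2"
      "fst x1 < fst x"
      by (rule decomposableD)
    then obtain a y where "atom a" "y \<in> Tops" "x1 = P a y" using less.hyps by blast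
    then show ?thesis using x P_assoc P_in_Tops by metis
  next
    case False
    then show ?thesis using less.prems P_unit_right unit_top_in_Tops by (metis atom_def)
  qed
qed

definition atom_split :: "top \<Rightarrow> top \<times> top" where
  "atom_split t = (SOME (a, y). atom a \<and> y \<in> Tops \<and> y \<noteq> unit_top \<and> t = P a y)"

lemma atom_split:
  assumes "decomposable t"
  shows "atom (fst (atom_split t))" "snd (atom_split t) \<in> Tops" "snd (atom_split t) \<noteq> unit_top"
    and "t = P (fst (atom_split t)) (snd (atom_split t))"
proof -
  obtain x1 x2 where "x1 \<in> Tops" "x2 \<in> Tops" "t = P x1 x2" using assms by (rule decomposableD)
  then have "t \<in> Tops" by (simp add: P_in_Tops)
  moreover have "t \<noteq> unit_top" using assms not_decomposable_unit by blast
  ultimately obtain a y where ay: "atom a" "y \<in> Tops" "t = P a y" using exists_atom_factor by blast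
  moreover have "y \<noteq> unit_top"
  proof
    assume "y = unit_top"
    then have "atom t" using ay P_unit_right by (simp add: atom_def)
    then show False using assms by (simp add: atom_def)
  qed
  ultimately have "\<exists>p. (\<lambda>(a, y). atom a \<and> y \<in> Tops \<and> y \<noteq> unit_top \<and> t = P a y) p" by blast
  then have "(\<lambda>(a, y). atom a \<and> y \<in> Tops \<and> y \<noteq> unit_top \<and> t = P a y) (atom_split t)"
    unfolding atom_split_def by (rule someI_ex)
  then show "atom (fst (atom_split t))" "snd (atom_split t) \<in> Tops" "snd (atom_split t) \<noteq> unit_top"
    and "t = P (fst (atom_split t)) (snd (atom_split t))"
    by (simp_all add: case_prod_beta)
qed

lemma atom_split_smaller:
  assumes "decomposable t"
  shows "fst (fst (atom_split t)) < fst t" "fst (snd (atom_split t)) < fst t"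
proof -
  note split = atom_split[OF assms]
  have "fst t = fst (fst (atom_split t)) + fst (snd (atom_split t))"
    using split(4) fst_P by metis
  moreover have "0 < fst (fst (atom_split t))" "0 < fst (snd (atom_split t))"
    by (intro Tops_size_pos; use split in \<open>simp add: atom_def\<close>)+
  ultimately show "fst (fst (atom_split t)) < fst t" "fst (snd (atom_split t)) < fst t"
    by simp_all
qed

lemma atom_split_P:
  assumes "atom a" "y \<in> Tops" "y \<noteq> unit_top"
  shows "atom_split (P a y) = (a, y)"
proof -
  have "decomposable (P a y)" using assms by (simp add: atom_def decomposableI)
  from atom_split[OF this] show ?thesis
    using atom_cancel assms by (metis prod.collapse)
qed

lemma multiplicative_if_atom_split:
  assumes split: "\<And>t. decomposable t \<Longrightarrow> g t = m (g (fst (atom_split t))) (g (snd (atom_split t)))"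
    and unit: "g unit_top = u"
    and m_assoc: "\<And>x y z. m (m x y) z = m x (m y z)"
    and m_unit_left: "\<And>x. m u x = x" and m_unit_right: "\<And>x. m x u = x"
  shows "multiplicative P m g"
  unfolding multiplicative_def
proof (intro ballI)
  have atom_left: "g (P a z) = m (g a) (g z)" if "atom a" "z \<in> Tops" for a z
  proof (cases "z = unit_top")
    case True
    then show ?thesis using that unit m_unit_right P_unit_right by (simp add: atom_def)
  next
    case False
    then have "decomposable (P a z)" using that by (simp add: atom_def decomposableI)
    then show ?thesis using split[of "P a z"] atom_split_P[OF that False] by simp
  qed
  show "g (P x y) = m (g x) (g y)" if "x \<in> Tops" "y \<in> Tops" for x y
    using that
  proof (induction "fst x" arbitrary: x rule: less_induct)
    case less
    show ?case
    proof (cases "x = unit_top")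
      case True
      then show ?thesis using less.prems unit m_unit_left P_unit_left by simp
    next
      case False
      then obtain a x' where x: "atom a" "x' \<in> Tops" "x = P a x'"
        using exists_atom_factor less.prems by blast
      then have "fst x' < fst x" using fst_P Tops_size_pos by (simp add: atom_def)
      then have "g (P x' y) = m (g x') (g y)" using less x by blast
      then show ?thesis
        using x atom_left less.prems P_assoc P_in_Tops m_assoc by metis
    qed
  qed
qed

end

text \<open>\<open>[n1]\<close> is open in \<open>a . b\<close>, whereas an open set of \<open>c \<down> d\<close> meeting the first block
  contains the whole second block.\<close>
lemma dot_top_neq_down_top:
  assumes "a \<in> Tops" "b \<in> Tops" "c \<in> Tops" "d \<in> Tops"
    and "a \<noteq> unit_top" "b \<noteq> unit_top" "c \<noteq> unit_top" "d \<noteq> unit_top"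
  shows "dot_top a b \<noteq> down_top c d"
proof
  assume eq: "dot_top a b = down_top c d"
  obtain n1 T1 n2 T2 n3 T3 n4 T4 where abcd: "a = (n1, T1)" "b = (n2, T2)" "c = (n3, T3)" "d = (n4, T4)"
    by (metis surj_pair)
  have t: "is_topology n1 T1" "is_topology n2 T2" "is_topology n3 T3" "is_topology n4 T4"
    using assms abcd by auto
  have pos: "0 < n1" "0 < n2" "0 < n3" "0 < n4" using Tops_size_pos assms abcd by fastforce+
  have "{1..n1} \<union> shift n1 {} \<in> glue n1 (T1 \<times> T2)"
    using is_topology_full[OF t(1)] is_topology_empty[OF t(2)] by (intro glue_memI) simp
  then have "{1..n1} \<in> glue n3 (T3 \<times> {{1..n4}} \<union> {{}} \<times> T4)"
    using eq by (simp add: abcd dot_top_eq_glue down_top_eq_glue)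
  then have "{1..n1} \<inter> {1..n3} = {} \<or> unshift n3 {1..n1} = {1..n4}"
    using glue_down_eq[OF t(3,4)] by blast
  moreover have "1 \<in> {1..n1} \<inter> {1..n3}" using pos by simp
  moreover have "n4 \<notin> unshift n3 {1..n1}"
    using eq pos by (simp add: abcd unshift_def dot_top_def down_top_def)
  ultimately show False using pos(4) by auto
qed

interpretation Dot: concat_product dot_top
  by unfold_locales (simp_all add: dot_top_in_Tops dot_top_assoc dot_top_unit_left
      dot_top_unit_right dot_top_prefix dot_top_suffix)

interpretation Down: concat_product down_top
  by unfold_locales (simp_all add: down_top_in_Tops down_top_assoc down_top_unit_left
      down_top_unit_right down_top_prefix down_top_suffix)

lemma not_decomposable_dot_down: "Down.decomposable t \<Longrightarrow> \<not> Dot.decomposable t"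
  unfolding Down.decomposable_def Dot.decomposable_def using dot_top_neq_down_top by metis

definition generator :: "bool \<Rightarrow> bool \<Rightarrow> top \<Rightarrow> bool" where
  "generator b1 b2 t \<longleftrightarrow>
     t \<in> Tops \<and> t \<noteq> unit_top \<and> \<not> (b1 \<and> Dot.decomposable t) \<and> \<not> (b2 \<and> Down.decomposable t)"

lemma generator_dot: "generator True False = indecomposable"
  by (auto simp: fun_eq_iff generator_def indecomposable_def Dot.decomposable_def)

lemma generator_down: "generator False True = down_indecomposable"
  by (auto simp: fun_eq_iff generator_def down_indecomposable_def Down.decomposable_def)

lemma generator_bi: "generator True True = bi_indecomposable"
  by (auto simp: fun_eq_iff generator_def bi_indecomposable_def indecomposable_def
      down_indecomposable_def Dot.decomposable_def Down.decomposable_def)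

text \<open>The flags select the products along which topologies are split, so that one function
  serves the three freeness statements.\<close>
function free_ext ::
    "bool \<Rightarrow> bool \<Rightarrow> (top \<Rightarrow> 'a) \<Rightarrow> ('a \<Rightarrow> 'a \<Rightarrow> 'a) \<Rightarrow> ('a \<Rightarrow> 'a \<Rightarrow> 'a) \<Rightarrow> 'a \<Rightarrow> top \<Rightarrow> 'a"
  where
  "free_ext b1 b2 a m1 m2 u t =
    (if b1 \<and> Dot.decomposable t then
       m1 (free_ext b1 b2 a m1 m2 u (fst (Dot.atom_split t)))
          (free_ext b1 b2 a m1 m2 u (snd (Dot.atom_split t)))
     else if b2 \<and> Down.decomposable t then
       m2 (free_ext b1 b2 a m1 m2 u (fst (Down.atom_split t)))
          (free_ext b1 b2 a m1 m2 u (snd (Down.atom_split t)))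
     else if t = unit_top then u else a t)"
  by pat_completeness auto
termination
  by (relation "measure (\<lambda>(b1, b2, a, m1, m2, u, t). fst t)")
    (auto intro: Dot.atom_split_smaller Down.atom_split_smaller)

declare free_ext.simps [simp del]

context
  fixes b1 b2 :: bool and a :: "top \<Rightarrow> 'a" and m1 m2 :: "'a \<Rightarrow> 'a \<Rightarrow> 'a" and u :: 'a
begin

lemma free_ext_unit: "free_ext b1 b2 a m1 m2 u unit_top = u"
  by (subst free_ext.simps) (simp add: Dot.not_decomposable_unit Down.not_decomposable_unit)

lemma free_ext_generator: "generator b1 b2 t \<Longrightarrow> free_ext b1 b2 a m1 m2 u t = a t"
  by (subst free_ext.simps) (auto simp: generator_def)

lemma free_ext_multiplicative_dot:
  assumes b1 and "\<And>x y z. m1 (m1 x y) z = m1 x (m1 y z)" "\<And>x. m1 u x = x" "\<And>x. m1 x u = x"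
  shows "multiplicative dot_top m1 (free_ext b1 b2 a m1 m2 u)"
proof -
  have "free_ext b1 b2 a m1 m2 u t = m1 (free_ext b1 b2 a m1 m2 u (fst (Dot.atom_split t)))
      (free_ext b1 b2 a m1 m2 u (snd (Dot.atom_split t)))" if "Dot.decomposable t" for t
    using that \<open>b1\<close> by (subst free_ext.simps) simp
  from Dot.multiplicative_if_atom_split[OF this free_ext_unit assms(2-4)] show ?thesis .
qed

lemma free_ext_multiplicative_down:
  assumes b2 and "\<And>x y z. m2 (m2 x y) z = m2 x (m2 y z)" "\<And>x. m2 u x = x" "\<And>x. m2 x u = x"
  shows "multiplicative down_top m2 (free_ext b1 b2 a m1 m2 u)"
proof -
  have "free_ext b1 b2 a m1 m2 u t = m2 (free_ext b1 b2 a m1 m2 u (fst (Down.atom_split t)))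
      (free_ext b1 b2 a m1 m2 u (snd (Down.atom_split t)))" if "Down.decomposable t" for t
    using that \<open>b2\<close> not_decomposable_dot_down by (subst free_ext.simps) simp
  from Down.multiplicative_if_atom_split[OF this free_ext_unit assms(2-4)] show ?thesis .
qed

end

lemma eq_on_Tops_if_eq_on_generators:
  assumes "g unit_top = h unit_top" "\<And>t. generator b1 b2 t \<Longrightarrow> g t = h t"
    and "b1 \<Longrightarrow> multiplicative dot_top m1 g" "b1 \<Longrightarrow> multiplicative dot_top m1 h"
    and "b2 \<Longrightarrow> multiplicative down_top m2 g" "b2 \<Longrightarrow> multiplicative down_top m2 h"
  shows "t \<in> Tops \<Longrightarrow> g t = h t"
proof (induction "fst t" arbitrary: t rule: less_induct)
  case less
  consider "t = unit_top" | "generator b1 b2 t" | "b1" "Dot.decomposable t" | "b2" "Down.decomposable t"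
    using less.prems generator_def by blast
  then show ?case
  proof cases
    case 3
    then obtain x y where "x \<in> Tops" "y \<in> Tops" "t = dot_top x y" "fst x < fst t" "fst y < fst t"
      by (elim Dot.decomposableD)
    then show ?thesis using less.hyps assms(3,4)[OF \<open>b1\<close>] by (simp add: multiplicative_def)
  next
    case 4
    then obtain x y where "x \<in> Tops" "y \<in> Tops" "t = down_top x y" "fst x < fst t" "fst y < fst t"
      by (elim Down.decomposableD)
    then show ?thesis using less.hyps assms(5,6)[OF \<open>b2\<close>] by (simp add: multiplicative_def)
  qed (use assms(1,2) in simp_all)
qed

definition lin_ext :: "('k::field \<Rightarrow> 'a::ab_group_add \<Rightarrow> 'a) \<Rightarrow> (top \<Rightarrow> 'a) \<Rightarrow> 'k hvec \<Rightarrow> 'a" where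
  "lin_ext sc g f = (\<Sum>t\<in>Poly_Mapping.keys f. sc (Poly_Mapping.lookup f t) (g t))"

lemma lookup_hscale: "Poly_Mapping.lookup (hscale c f) t = c * Poly_Mapping.lookup f t"
  by (simp add: hscale_def map.rep_eq when_def)

lemma keys_hscale: "Poly_Mapping.keys (hscale c f) \<subseteq> Poly_Mapping.keys f"
  by (auto simp: in_keys_iff lookup_hscale)

lemma lin_prod_basis: "lin_prod P (basis x) (basis y) = (basis (P x y) :: 'k::field hvec)"
  by (simp add: lin_prod_def basis_def)

lemma HT_add: "f \<in> HT \<Longrightarrow> g \<in> HT \<Longrightarrow> f + g \<in> HT"
  unfolding HT_def mem_Collect_eq by (rule order_trans[OF keys_add], rule Un_least)

lemma HT_hscale: "f \<in> HT \<Longrightarrow> hscale c f \<in> HT"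
  unfolding HT_def mem_Collect_eq by (rule order_trans[OF keys_hscale])

lemma HT_basis: "t \<in> Tops \<Longrightarrow> basis t \<in> HT"
  by (simp add: HT_def basis_def)

lemma HT_zero: "0 \<in> HT"
  by (simp add: HT_def)

lemma HT_sum: "(\<And>i. i \<in> S \<Longrightarrow> h i \<in> HT) \<Longrightarrow> sum h S \<in> HT"
  by (induction S rule: infinite_finite_induct) (simp_all add: HT_zero HT_add)

lemma hvec_expansion:
  "(f :: 'k::field hvec) = (\<Sum>t\<in>Poly_Mapping.keys f. hscale (Poly_Mapping.lookup f t) (basis t))"
proof (rule poly_mapping_eqI)
  have "hscale (Poly_Mapping.lookup f t) (basis t) = Poly_Mapping.single t (Poly_Mapping.lookup f t)"
    for t
    by (simp add: hscale_def basis_def)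
  then show "Poly_Mapping.lookup f k =
      Poly_Mapping.lookup (\<Sum>t\<in>Poly_Mapping.keys f. hscale (Poly_Mapping.lookup f t) (basis t)) k" for k
    by (simp add: lookup_sum lookup_single when_def in_keys_iff)
qed

lemma lin_on_HT_sum:
  assumes "lin_on_HT sc \<psi>" "finite S" "\<And>i. i \<in> S \<Longrightarrow> h i \<in> HT"
  shows "\<psi> (sum h S) = (\<Sum>i\<in>S. \<psi> (h i))"
  using assms(2,3)
proof (induction S rule: finite_induct)
  case empty
  have "\<psi> (0 + 0) = \<psi> 0 + \<psi> 0" using assms(1) HT_zero unfolding lin_on_HT_def by blast
  then show ?case by simp
next
  case (insert x F)
  then show ?case using assms(1) HT_sum[of F h] by (simp add: lin_on_HT_def)
qed

lemma lin_on_HT_eq_lin_ext: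
  assumes "lin_on_HT sc \<psi>" "f \<in> HT" "\<And>t. t \<in> Tops \<Longrightarrow> \<psi> (basis t) = g t"
  shows "\<psi> f = lin_ext sc g f"
proof -
  have keys: "Poly_Mapping.keys f \<subseteq> Tops" using assms(2) by (simp add: HT_def)
  have "\<psi> f = \<psi> (\<Sum>t\<in>Poly_Mapping.keys f. hscale (Poly_Mapping.lookup f t) (basis t))"
    using hvec_expansion by metis
  also have "\<dots> = (\<Sum>t\<in>Poly_Mapping.keys f. \<psi> (hscale (Poly_Mapping.lookup f t) (basis t)))"
    using keys by (intro lin_on_HT_sum[OF assms(1)]) (auto intro: HT_hscale HT_basis)
  also have "\<dots> = lin_ext sc g f"
    unfolding lin_ext_def
  proof (rule sum.cong [OF refl])
    fix t assume "t \<in> Poly_Mapping.keys f"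
    then have "t \<in> Tops" using keys by blast
    then show "\<psi> (hscale (Poly_Mapping.lookup f t) (basis t)) = sc (Poly_Mapping.lookup f t) (g t)"
      using assms(1,3) HT_basis unfolding lin_on_HT_def by metis
  qed
  finally show ?thesis .
qed

lemma alg_hom_multiplicative_basis:
  "alg_hom_HT P sc m u \<psi> \<Longrightarrow> multiplicative P m (\<lambda>t. \<psi> (basis t :: 'k::field hvec))"
  by (simp add: alg_hom_HT_def multiplicative_def HT_basis flip: lin_prod_basis)

locale k_alg =
  fixes sc :: "'k::field \<Rightarrow> 'a::ab_group_add \<Rightarrow> 'a" and m :: "'a \<Rightarrow> 'a \<Rightarrow> 'a" and u :: 'a
  assumes k_algebra: "k_algebra sc m u"
begin

lemma
  shows sc_add_right: "sc c (x + y) = sc c x + sc c y"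
    and sc_add_left: "sc (c + d) x = sc c x + sc d x"
    and sc_mult: "sc (c * d) x = sc c (sc d x)"
    and sc_one: "sc 1 x = x"
    and m_assoc: "m (m x y) z = m x (m y z)"
    and m_add_left: "m (x + y) z = m x z + m y z"
    and m_add_right: "m x (y + z) = m x y + m x z"
    and m_sc_left: "m (sc c x) y = sc c (m x y)"
    and m_sc_right: "m x (sc c y) = sc c (m x y)"
    and m_unit_left: "m u x = x"
    and m_unit_right: "m x u = x"
  using k_algebra unfolding k_algebra_def by simp_all

lemma sc_zero_left: "sc 0 x = 0"
  using sc_add_left[of 0 0 x] by simp

lemma sc_zero_right: "sc c 0 = 0"
  using sc_add_right[of c 0 0] by simp

lemma sc_commute: "sc c (sc d x) = sc d (sc c x)"
  by (metis sc_mult mult.commute)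

lemma m_zero_left: "m 0 y = 0"
  using m_add_left[of 0 0 y] by simp

lemma m_zero_right: "m x 0 = 0"
  using m_add_right[of x 0 0] by simp

lemma sc_sum: "sc c (sum g S) = (\<Sum>i\<in>S. sc c (g i))"
  using sum_comp_morphism[of "sc c" g S] sc_zero_right sc_add_right by (simp add: o_def)

lemma m_sum_left: "m (sum g S) y = (\<Sum>i\<in>S. m (g i) y)"
  using sum_comp_morphism[of "\<lambda>x. m x y" g S] m_zero_left m_add_left by (simp add: o_def)

lemma m_sum_right: "m x (sum g S) = (\<Sum>i\<in>S. m x (g i))"
  using sum_comp_morphism[of "m x" g S] m_zero_right m_add_right by (simp add: o_def)

lemma lin_ext_superset:
  assumes "finite S" "Poly_Mapping.keys f \<subseteq> S"
  shows "lin_ext sc g f = (\<Sum>t\<in>S. sc (Poly_Mapping.lookup f t) (g t))"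
  unfolding lin_ext_def
  by (rule sum.mono_neutral_left[OF assms]) (simp add: in_keys_iff sc_zero_left)

lemma lin_ext_add: "lin_ext sc g (f1 + f2) = lin_ext sc g f1 + lin_ext sc g f2"
proof -
  let ?S = "Poly_Mapping.keys f1 \<union> Poly_Mapping.keys f2"
  have "lin_ext sc g (f1 + f2) = (\<Sum>t\<in>?S. sc (Poly_Mapping.lookup (f1 + f2) t) (g t))"
    by (rule lin_ext_superset) (auto simp: keys_add)
  also have "\<dots> = lin_ext sc g f1 + lin_ext sc g f2"
    using lin_ext_superset[of ?S f1 g] lin_ext_superset[of ?S f2 g]
    by (simp add: lookup_add sc_add_left sum.distrib)
  finally show ?thesis .
qed

lemma lin_ext_sum: "lin_ext sc g (sum h S) = (\<Sum>i\<in>S. lin_ext sc g (h i))"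
  using sum_comp_morphism[of "lin_ext sc g" h S] lin_ext_add by (simp add: o_def lin_ext_def)

lemma lin_ext_single: "lin_ext sc g (Poly_Mapping.single t c) = sc c (g t)"
  by (cases "c = 0") (simp_all add: lin_ext_def sc_zero_left)

lemma lin_ext_hscale: "lin_ext sc g (hscale c f) = sc c (lin_ext sc g f)"
proof -
  have "lin_ext sc g (hscale c f) =
      (\<Sum>t\<in>Poly_Mapping.keys f. sc (Poly_Mapping.lookup (hscale c f) t) (g t))"
    by (rule lin_ext_superset) (auto simp: keys_hscale)
  then show ?thesis by (simp add: lookup_hscale sc_mult sc_sum lin_ext_def)
qed

lemma lin_ext_basis: "lin_ext sc g (basis t) = g t"
  by (simp add: basis_def lin_ext_single sc_one)

lemma lin_ext_lin_prod:
  assumes "f1 \<in> HT" "f2 \<in> HT" "multiplicative P m g"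
  shows "lin_ext sc g (lin_prod P f1 f2) = m (lin_ext sc g f1) (lin_ext sc g f2)"
proof -
  have keys: "Poly_Mapping.keys f1 \<subseteq> Tops" "Poly_Mapping.keys f2 \<subseteq> Tops"
    using assms(1,2) by (auto simp: HT_def)
  have "lin_ext sc g (lin_prod P f1 f2) = (\<Sum>x\<in>Poly_Mapping.keys f1. \<Sum>y\<in>Poly_Mapping.keys f2.
      sc (Poly_Mapping.lookup f1 x * Poly_Mapping.lookup f2 y) (g (P x y)))"
    by (simp add: lin_prod_def lin_ext_sum lin_ext_single)
  also have "\<dots> = (\<Sum>x\<in>Poly_Mapping.keys f1. \<Sum>y\<in>Poly_Mapping.keys f2.
      m (sc (Poly_Mapping.lookup f1 x) (g x)) (sc (Poly_Mapping.lookup f2 y) (g y)))"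
  proof (intro sum.cong refl)
    fix x y assume "x \<in> Poly_Mapping.keys f1" "y \<in> Poly_Mapping.keys f2"
    then have "g (P x y) = m (g x) (g y)" using assms(3) keys by (auto simp: multiplicative_def)
    then show "sc (Poly_Mapping.lookup f1 x * Poly_Mapping.lookup f2 y) (g (P x y)) =
        m (sc (Poly_Mapping.lookup f1 x) (g x)) (sc (Poly_Mapping.lookup f2 y) (g y))"
      by (simp add: sc_mult m_sc_left m_sc_right sc_commute)
  qed
  also have "\<dots> = m (lin_ext sc g f1) (lin_ext sc g f2)"
    by (simp add: lin_ext_def m_sum_left m_sum_right) (rule sum.swap)
  finally show ?thesis .
qed

lemma lin_ext_alg_hom:
  "multiplicative P m g \<Longrightarrow> g unit_top = u \<Longrightarrow> alg_hom_HT P sc m u (lin_ext sc g)"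
  unfolding alg_hom_HT_def lin_on_HT_def
  by (simp add: lin_ext_add lin_ext_hscale lin_ext_basis lin_ext_lin_prod)

end

lemma lin_ext_free_ext:
  fixes sc :: "'k::field \<Rightarrow> 'a::ab_group_add \<Rightarrow> 'a"
  assumes "k_algebra sc m1 u" "k_algebra sc m2 u"
  shows "b1 \<Longrightarrow> alg_hom_HT dot_top sc m1 u (lin_ext sc (free_ext b1 b2 a m1 m2 u))"
    and "b2 \<Longrightarrow> alg_hom_HT down_top sc m2 u (lin_ext sc (free_ext b1 b2 a m1 m2 u))"
    and "generator b1 b2 t \<Longrightarrow> lin_ext sc (free_ext b1 b2 a m1 m2 u) (basis t) = a t"
proof -
  interpret A1: k_alg sc m1 u by (rule k_alg.intro) (rule assms(1))
  interpret A2: k_alg sc m2 u by (rule k_alg.intro) (rule assms(2))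
  show "b1 \<Longrightarrow> alg_hom_HT dot_top sc m1 u (lin_ext sc (free_ext b1 b2 a m1 m2 u))"
    by (intro A1.lin_ext_alg_hom free_ext_multiplicative_dot free_ext_unit)
      (simp_all add: A1.m_assoc A1.m_unit_left A1.m_unit_right)
  show "b2 \<Longrightarrow> alg_hom_HT down_top sc m2 u (lin_ext sc (free_ext b1 b2 a m1 m2 u))"
    by (intro A2.lin_ext_alg_hom free_ext_multiplicative_down free_ext_unit)
      (simp_all add: A2.m_assoc A2.m_unit_left A2.m_unit_right)
  show "generator b1 b2 t \<Longrightarrow> lin_ext sc (free_ext b1 b2 a m1 m2 u) (basis t) = a t"
    by (simp add: A1.lin_ext_basis free_ext_generator)
qed

lemma eq_lin_ext_free_ext:
  fixes \<psi> :: "'k::field hvec \<Rightarrow> 'a::ab_group_add"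
  assumes "k_algebra sc m1 u" "k_algebra sc m2 u" "b1 \<or> b2"
    and hom1: "b1 \<Longrightarrow> alg_hom_HT dot_top sc m1 u \<psi>"
    and hom2: "b2 \<Longrightarrow> alg_hom_HT down_top sc m2 u \<psi>"
    and gen: "\<And>t. generator b1 b2 t \<Longrightarrow> \<psi> (basis t) = a t"
    and "f \<in> HT"
  shows "\<psi> f = lin_ext sc (free_ext b1 b2 a m1 m2 u) f"
proof -
  interpret A1: k_alg sc m1 u by (rule k_alg.intro) (rule assms(1))
  interpret A2: k_alg sc m2 u by (rule k_alg.intro) (rule assms(2))
  have lin: "lin_on_HT sc \<psi>" and unit: "\<psi> (basis unit_top) = u"
    using assms(3) hom1 hom2 by (auto simp: alg_hom_HT_def)
  have "\<psi> (basis t) = free_ext b1 b2 a m1 m2 u t" if "t \<in> Tops" for t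
  proof (rule eq_on_Tops_if_eq_on_generators[where g = "\<lambda>t. \<psi> (basis t)"])
    show "\<psi> (basis unit_top) = free_ext b1 b2 a m1 m2 u unit_top"
      using unit by (simp add: free_ext_unit)
    show "\<psi> (basis t) = free_ext b1 b2 a m1 m2 u t" if "generator b1 b2 t" for t
      using gen[OF that] by (simp add: free_ext_generator[OF that])
    show "multiplicative dot_top m1 (\<lambda>t. \<psi> (basis t))" if b1
      using hom1[OF that] by (rule alg_hom_multiplicative_basis)
    show "multiplicative down_top m2 (\<lambda>t. \<psi> (basis t))" if b2
      using hom2[OF that] by (rule alg_hom_multiplicative_basis)
    show "multiplicative dot_top m1 (free_ext b1 b2 a m1 m2 u)" if b1
      using that A1.m_assoc A1.m_unit_left A1.m_unit_right by (rule free_ext_multiplicative_dot)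
    show "multiplicative down_top m2 (free_ext b1 b2 a m1 m2 u)" if b2
      using that A2.m_assoc A2.m_unit_left A2.m_unit_right by (rule free_ext_multiplicative_down)
  qed (rule that)
  with lin \<open>f \<in> HT\<close> show ?thesis by (rule lin_on_HT_eq_lin_ext)
qed

lemma free_dot_algebra: "freely_generated TYPE('k::field) TYPE('a::ab_group_add) dot_top indecomposable"
  unfolding freely_generated_def generator_dot[symmetric]
proof (intro allI impI exI conjI ballI)
  fix sc :: "'k \<Rightarrow> 'a \<Rightarrow> 'a" and m u a \<psi> and f :: "'k hvec"
  assume alg: "k_algebra sc m u"
  show "alg_hom_HT dot_top sc m u (lin_ext sc (free_ext True False a m m u))"
    by (rule lin_ext_free_ext(1)[OF alg alg]) simp
  show "lin_ext sc (free_ext True False a m m u) (basis t) = a t" if "generator True False t" for t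
    using lin_ext_free_ext(3)[OF alg alg that] .
  assume "alg_hom_HT dot_top sc m u \<psi> \<and> (\<forall>t. generator True False t \<longrightarrow> \<psi> (basis t) = a t)"
    and "f \<in> HT"
  then show "\<psi> f = lin_ext sc (free_ext True False a m m u) f"
    by (intro eq_lin_ext_free_ext[OF alg alg]) auto
qed

lemma free_down_algebra:
  "freely_generated TYPE('k::field) TYPE('a::ab_group_add) down_top down_indecomposable"
  unfolding freely_generated_def generator_down[symmetric]
proof (intro allI impI exI conjI ballI)
  fix sc :: "'k \<Rightarrow> 'a \<Rightarrow> 'a" and m u a \<psi> and f :: "'k hvec"
  assume alg: "k_algebra sc m u"
  show "alg_hom_HT down_top sc m u (lin_ext sc (free_ext False True a m m u))"
    by (rule lin_ext_free_ext(2)[OF alg alg]) simp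
  show "lin_ext sc (free_ext False True a m m u) (basis t) = a t" if "generator False True t" for t
    using lin_ext_free_ext(3)[OF alg alg that] .
  assume "alg_hom_HT down_top sc m u \<psi> \<and> (\<forall>t. generator False True t \<longrightarrow> \<psi> (basis t) = a t)"
    and "f \<in> HT"
  then show "\<psi> f = lin_ext sc (free_ext False True a m m u) f"
    by (intro eq_lin_ext_free_ext[OF alg alg]) auto
qed

lemma free_two_assoc_algebra:
  "freely_generated2 TYPE('k::field) TYPE('a::ab_group_add) bi_indecomposable"
  unfolding freely_generated2_def generator_bi[symmetric]
proof (intro allI impI exI conjI ballI)
  fix sc :: "'k \<Rightarrow> 'a \<Rightarrow> 'a" and m1 m2 u a \<psi> and f :: "'k hvec"
  assume "two_assoc_algebra sc m1 m2 u"
  then have alg: "k_algebra sc m1 u" "k_algebra sc m2 u" by (simp_all add: two_assoc_algebra_def)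
  show "alg_hom_HT dot_top sc m1 u (lin_ext sc (free_ext True True a m1 m2 u))"
    by (rule lin_ext_free_ext(1)[OF alg]) simp
  show "alg_hom_HT down_top sc m2 u (lin_ext sc (free_ext True True a m1 m2 u))"
    by (rule lin_ext_free_ext(2)[OF alg]) simp
  show "lin_ext sc (free_ext True True a m1 m2 u) (basis t) = a t" if "generator True True t" for t
    using lin_ext_free_ext(3)[OF alg that] .
  assume "alg_hom_HT dot_top sc m1 u \<psi> \<and> alg_hom_HT down_top sc m2 u \<psi> \<and>
      (\<forall>t. generator True True t \<longrightarrow> \<psi> (basis t) = a t)"
    and "f \<in> HT"
  then show "\<psi> f = lin_ext sc (free_ext True True a m1 m2 u) f"
    by (intro eq_lin_ext_free_ext[OF alg]) auto
qed

theorem proposition5: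
  shows "freely_generated TYPE('k::field) TYPE('a::ab_group_add) dot_top indecomposable
       \<and> freely_generated TYPE('k) TYPE('b::ab_group_add) down_top down_indecomposable
       \<and> freely_generated2 TYPE('k) TYPE('c::ab_group_add) bi_indecomposable"
  using free_dot_algebra free_down_algebra free_two_assoc_algebra by blast

end
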